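(* Let $h:H\to H$ be Fréchet differentiable with continuous derivative $Dh:H\to L(H)$ satisfying $\sup_{\|v\|_H=1}\|Dh(u)v\|_H\le C(1+\|u\|_H)$ for all $u\in H$. Let $f:\mathcal{P}_2(H)\to H$, $f(\mu):=\int_Hh(x)\,\mu(dx)$ (Bochner integral). Then for all $X_1,X_2\in L^2(\Omega,H)$, $$|\!|\!|D\hat f(X_1)|\!|\!|_{2,\mathbb{P}}^2\le\mathbb{E}\big[\|Dh(X_1)\|^2\big]<\infty,\qquad |\!|\!|D\hat f(X_1)-D\hat f(X_2)|\!|\!|_{2,\mathbb{P}}^2\le\mathbb{E}\big[\|Dh(X_1)-Dh(X_2)\|^2\big].$$ In particular $f$ is absolutely continuous $L$-differentiable with $\partial_\mu f(\mu_0)(x)=Dh(x)$ for every $\mu_0\in\mathcal{P}_2(H)$.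
   Context: $(\Omega,\mathcal{F},\mathbb{P})$ complete atomless probability space, $\Omega$ Polish; $H$ separable real Hilbert space; $\|\cdot\|$ the operator norm on $L(H)=L(H,H)$. $\hat f(X)=f(\mathcal{L}(X))$ is the lift on $L^2(\Omega,H)$. For bounded linear $L:L^2(\Omega,H)\to H$, $|\!|\!|L|\!|\!|_{2,\mathbb{P}}:=\sup\{\sum_i\|L(\mathbf{1}_{A_i}x_i)\|_H:A_i\in\mathcal{F}$ pairwise disjoint, $x_i\in H$, $\mathbb{E}\|\sum_i\mathbf{1}_{A_i}x_i\|^2\le1\}$. $f$ is absolutely continuous $L$-differentiable if $\hat f$ is Fréchet differentiable with $|\!|\!|D\hat f(X)|\!|\!|_{2,\mathbb{P}}<\infty$ for all $X$ and $X\mapsto D\hat f(X)$ continuous in this norm; $\partial_\mu f(\mu_0)\in L^2(H,\mu_0;L(H))$ is then the unique element with $D\hat f(X)Y=\mathbb{E}[\partial_\mu f(\mu_0)(X)Y]$ for all $X\sim\mu_0$, $Y\in L^2(\Omega,H)$. *)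

theory Defs
  imports "HOL-Probability.Probability"
begin

definition L2rv :: "'w measure \<Rightarrow> ('w \<Rightarrow> 'h::{real_normed_vector, second_countable_topology}) set" where
  "L2rv M = {X. X \<in> borel_measurable M \<and> integrable M (\<lambda>w. (norm (X w))\<^sup>2)}"

definition L2norm :: "'w measure \<Rightarrow> ('w \<Rightarrow> 'h::real_normed_vector) \<Rightarrow> real" where
  "L2norm M X = sqrt (integral\<^sup>L M (\<lambda>w. (norm (X w))\<^sup>2))"

definition P2 :: "('h::{real_normed_vector, second_countable_topology}) measure set" where
  "P2 = {\<mu>. prob_space \<mu> \<and> sets \<mu> = sets borel \<and> (\<integral>\<^sup>+ x. ennreal ((norm x)\<^sup>2) \<partial>\<mu>) < \<infinity>}"

definition lift :: "'w measure \<Rightarrow> ('h::topological_space measure \<Rightarrow> 'b) \<Rightarrow> ('w \<Rightarrow> 'h) \<Rightarrow> 'b" where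
  "lift M f X = f (distr M borel X)"

definition frechet_L2 :: "'w measure \<Rightarrow> (('w \<Rightarrow> 'h::{real_normed_vector, second_countable_topology}) \<Rightarrow> 'h) \<Rightarrow> ('w \<Rightarrow> 'h) \<Rightarrow> (('w \<Rightarrow> 'h) \<Rightarrow> 'h) \<Rightarrow> bool"
  where
  "frechet_L2 M F X L \<longleftrightarrow>
     (\<forall>Y\<in>L2rv M. \<forall>Z\<in>L2rv M. L (\<lambda>w. Y w + Z w) = L Y + L Z) \<and>
     (\<forall>Y\<in>L2rv M. \<forall>c::real. L (\<lambda>w. c *\<^sub>R Y w) = c *\<^sub>R L Y) \<and>
     (\<exists>K. \<forall>Y\<in>L2rv M. norm (L Y) \<le> K * L2norm M Y) \<and>
     (\<forall>e>0. \<exists>d>0. \<forall>Y\<in>L2rv M. L2norm M Y < d \<longrightarrow>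
         norm (F (\<lambda>w. X w + Y w) - F X - L Y) \<le> e * L2norm M Y)"

definition trinorm :: "'w measure \<Rightarrow> (('w \<Rightarrow> 'h::real_normed_vector) \<Rightarrow> 'h) \<Rightarrow> ennreal" where
  "trinorm M L = Sup {ennreal (\<Sum>i\<in>I. norm (L (\<lambda>w. indicator (A i) w *\<^sub>R x i))) | I A x.
       finite (I::nat set) \<and> (\<forall>i\<in>I. A i \<in> sets M) \<and> disjoint_family_on A I \<and>
       integral\<^sup>L M (\<lambda>w. (norm (\<Sum>i\<in>I. indicator (A i) w *\<^sub>R x i))\<^sup>2) \<le> 1}"

definition abs_cont_L_diff :: "'w measure \<Rightarrow> ('h::{real_normed_vector, second_countable_topology} measure \<Rightarrow> 'h) \<Rightarrow> bool" where
  "abs_cont_L_diff M f \<longleftrightarrow>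
     (\<forall>X\<in>L2rv M. \<exists>L. frechet_L2 M (lift M f) X L \<and> trinorm M L < \<infinity>) \<and>
     (\<forall>X\<in>L2rv M. \<forall>e>0. \<exists>d>0. \<forall>X'\<in>L2rv M. \<forall>L L'.
         frechet_L2 M (lift M f) X L \<longrightarrow> frechet_L2 M (lift M f) X' L' \<longrightarrow>
         L2norm M (\<lambda>w. X' w - X w) < d \<longrightarrow> trinorm M (\<lambda>Y. L' Y - L Y) < ennreal e)"

definition is_L_derivative :: "'w measure \<Rightarrow> ('h::{real_normed_vector, second_countable_topology} measure \<Rightarrow> 'h)
    \<Rightarrow> 'h measure \<Rightarrow> ('h \<Rightarrow> ('h \<Rightarrow>\<^sub>L 'h)) \<Rightarrow> bool" where
  "is_L_derivative M f \<mu>0 g \<longleftrightarrow>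
     g \<in> borel_measurable \<mu>0 \<and> (\<integral>\<^sup>+ x. ennreal ((norm (g x))\<^sup>2) \<partial>\<mu>0) < \<infinity> \<and>
     (\<forall>X\<in>L2rv M. distr M borel X = \<mu>0 \<longrightarrow> (\<forall>L. frechet_L2 M (lift M f) X L \<longrightarrow>
        (\<forall>Y\<in>L2rv M. L Y = integral\<^sup>L M (\<lambda>w. blinfun_apply (g (X w)) (Y w)))))"

definition atomless :: "'w measure \<Rightarrow> bool" where
  "atomless M \<longleftrightarrow> (\<forall>A\<in>sets M. measure M A > 0 \<longrightarrow>
      (\<exists>B\<in>sets M. B \<subseteq> A \<and> 0 < measure M B \<and> measure M B < measure M A))"

end

(*
  Since lift M f X = E[h(X)], the remainder of the lift at X in direction Y is
  E[h(X + Y) - h(X) - Dh(X) Y], whose norm is at most E[rho(X, Y) |Y|] <= ||rho(X, Y)||_2 ||Y||_2,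
  where rho(x, y) = |h(x + y) - h(x) - Dh(x) y| / |y|.  By the mean value inequality and the
  growth bound, rho(x, y)^2 <= K (1 + |x|^2 + |y|^2), and rho(x, y) -> 0 as y -> 0; along an a.e.
  convergent subsequence, dominated convergence then gives E[rho(X, Y)^2] -> 0 as ||Y||_2 -> 0.
  So D hat f(X) Y = E[Dh(X) Y].  Testing this derivative on simple random variables
  sum_i 1_{A_i} x_i and applying Cauchy-Schwarz bounds |||.|||_{2,P} by the L^2 norm of Dh(X),
  resp. of Dh(X1) - Dh(X2); the latter tends to 0 as X2 -> X1 in L^2 by the same argument.
*)

theory Submission
  imports Defs
begin

text \<open>The library develops Bochner integration for the class \<open>banach\<close>, which does not contain the
  sort \<open>{real_inner, polish_space}\<close> of the theorem. Products of complete normed spaces are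
  \<open>banach\<close>, so the needed facts are transported along the isometric embedding \<open>y \<mapsto> (y, 0::real)\<close>.\<close>

instance prod :: ("{real_normed_vector, complete_space}", "{real_normed_vector, complete_space}") banach ..

lemma bounded_linear_Pair_zero: "bounded_linear (\<lambda>y. (y, 0::real))"
  using bounded_linear_Pair[OF bounded_linear_ident bounded_linear_zero] by simp

lemma integrable_iff_integrable_Pair_zero:
  "integrable M f \<longleftrightarrow> integrable M (\<lambda>x. (f x, 0::real))"
  using integrable_bounded_linear[OF bounded_linear_Pair_zero, of M f]
    integrable_bounded_linear[OF bounded_linear_fst, of M "\<lambda>x. (f x, 0::real)"] by auto

lemma integral_eq_fst_integral_Pair_zero:
  "integral\<^sup>L M f = fst (integral\<^sup>L M (\<lambda>x. (f x, 0::real)))"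
  by (subst integral_bounded_linear'[OF bounded_linear_Pair_zero bounded_linear_fst]) auto

lemma integrable_iff_bounded_complete:
  fixes f :: "'a \<Rightarrow> 'b::{real_normed_vector, complete_space, second_countable_topology}"
  shows "integrable M f \<longleftrightarrow> f \<in> borel_measurable M \<and> (\<integral>\<^sup>+x. norm (f x) \<partial>M) < \<infinity>"
proof -
  have "(\<lambda>x. (f x, 0::real)) \<in> borel_measurable M \<longleftrightarrow> f \<in> borel_measurable M"
  proof
    assume "(\<lambda>x. (f x, 0::real)) \<in> borel_measurable M"
    from measurable_compose[OF this borel_measurable_continuous_onI[OF continuous_on_fst[OF continuous_on_id]]]
    show "f \<in> borel_measurable M" by simp
  qed (intro borel_measurable_Pair measurable_const, simp_all)
  then show ?thesis
    unfolding integrable_iff_integrable_Pair_zero[of M f] integrable_iff_bounded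
    by (simp add: norm_Pair)
qed

lemma integrable_bound_complete:
  fixes f :: "'a \<Rightarrow> real"
    and g :: "'a \<Rightarrow> 'b::{real_normed_vector, complete_space, second_countable_topology}"
  assumes "integrable M f" "g \<in> borel_measurable M" "AE x in M. norm (g x) \<le> f x"
  shows "integrable M g"
proof -
  have "(\<integral>\<^sup>+x. norm (g x) \<partial>M) \<le> (\<integral>\<^sup>+x. norm (f x) \<partial>M)"
    using assms(3) by (intro nn_integral_mono_AE) auto
  also have "\<dots> < \<infinity>"
    using assms(1) by (simp add: integrable_iff_bounded)
  finally show ?thesis
    using assms(2) by (simp add: integrable_iff_bounded_complete)
qed

lemma integral_norm_bound_complete:
  fixes f :: "'a \<Rightarrow> 'b::{real_normed_vector, complete_space, second_countable_topology}"
  shows "norm (integral\<^sup>L M f) \<le> (\<integral>x. norm (f x) \<partial>M)"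
proof -
  have "norm (integral\<^sup>L M f) \<le> norm (integral\<^sup>L M (\<lambda>x. (f x, 0::real)))"
    unfolding integral_eq_fst_integral_Pair_zero[of M f] by (metis norm_fst_le prod.collapse)
  also have "\<dots> \<le> (\<integral>x. norm (f x, 0::real) \<partial>M)"
    by (rule integral_norm_bound)
  finally show ?thesis
    by (simp add: norm_Pair)
qed

lemma integral_distr_complete:
  fixes f :: "'b \<Rightarrow> 'c::{real_normed_vector, complete_space, second_countable_topology}"
  assumes "g \<in> measurable M N" and "f \<in> borel_measurable N"
  shows "integral\<^sup>L (distr M N g) f = integral\<^sup>L M (\<lambda>x. f (g x))"
  using assms by (simp add: integral_eq_fst_integral_Pair_zero[of _ f]
      integral_eq_fst_integral_Pair_zero[of _ "\<lambda>x. f (g x)"] integral_distr)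

lemma integrable_mult_if_square_integrable:
  fixes f g :: "'a \<Rightarrow> real"
  assumes "f \<in> borel_measurable M" "g \<in> borel_measurable M"
    and "integrable M (\<lambda>x. (f x)\<^sup>2)" "integrable M (\<lambda>x. (g x)\<^sup>2)"
  shows "integrable M (\<lambda>x. f x * g x)"
proof (rule Bochner_Integration.integrable_bound)
  show "integrable M (\<lambda>x. (f x)\<^sup>2 + (g x)\<^sup>2)"
    using assms by auto
  show "AE x in M. norm (f x * g x) \<le> norm ((f x)\<^sup>2 + (g x)\<^sup>2)"
  proof (rule AE_I2)
    fix x
    have "2 * \<bar>f x\<bar> * \<bar>g x\<bar> \<le> (f x)\<^sup>2 + (g x)\<^sup>2"
      using sum_squares_bound[of "\<bar>f x\<bar>" "\<bar>g x\<bar>"] by simp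
    then have "\<bar>f x * g x\<bar> \<le> (f x)\<^sup>2 + (g x)\<^sup>2"
      using zero_le_mult_iff[of "\<bar>f x\<bar>" "\<bar>g x\<bar>"] by (simp only: abs_mult) linarith
    then show "norm (f x * g x) \<le> norm ((f x)\<^sup>2 + (g x)\<^sup>2)"
      by simp
  qed
qed (use assms in simp)

lemma Cauchy_Schwarz_integral:
  fixes f g :: "'a \<Rightarrow> real"
  assumes [measurable]: "f \<in> borel_measurable M" "g \<in> borel_measurable M"
    and f2: "integrable M (\<lambda>x. (f x)\<^sup>2)" and g2: "integrable M (\<lambda>x. (g x)\<^sup>2)"
  shows "(\<integral>x. \<bar>f x * g x\<bar> \<partial>M) \<le> sqrt (\<integral>x. (f x)\<^sup>2 \<partial>M) * sqrt (\<integral>x. (g x)\<^sup>2 \<partial>M)"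
proof -
  have fg: "integrable M (\<lambda>x. \<bar>f x * g x\<bar>)"
    using integrable_mult_if_square_integrable[OF assms] by simp
  have "ennreal ((\<integral>x. \<bar>f x * g x\<bar> \<partial>M)\<^sup>2) = (\<integral>\<^sup>+x. ennreal \<bar>f x\<bar> * ennreal \<bar>g x\<bar> \<partial>M)\<^sup>2"
    using nn_integral_eq_integral[OF fg] by (simp add: ennreal_power abs_mult ennreal_mult)
  also have "\<dots> \<le> (\<integral>\<^sup>+x. ennreal \<bar>f x\<bar> ^ 2 \<partial>M) * (\<integral>\<^sup>+x. ennreal \<bar>g x\<bar> ^ 2 \<partial>M)"
    by (rule Cauchy_Schwarz_nn_integral) measurable
  also have "\<dots> = ennreal ((\<integral>x. (f x)\<^sup>2 \<partial>M) * (\<integral>x. (g x)\<^sup>2 \<partial>M))"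
    using nn_integral_eq_integral[OF f2] nn_integral_eq_integral[OF g2]
    by (simp add: ennreal_power ennreal_mult)
  finally have "(\<integral>x. \<bar>f x * g x\<bar> \<partial>M)\<^sup>2 \<le> (\<integral>x. (f x)\<^sup>2 \<partial>M) * (\<integral>x. (g x)\<^sup>2 \<partial>M)"
    by simp
  then show ?thesis
    by (simp add: real_le_rsqrt real_sqrt_mult[symmetric])
qed

lemma L2rv_add:
  assumes "Y \<in> L2rv M" "Z \<in> L2rv M"
  shows "(\<lambda>w. Y w + Z w) \<in> L2rv M"
proof -
  have [measurable]: "Y \<in> borel_measurable M" "Z \<in> borel_measurable M"
    using assms by (auto simp: L2rv_def)
  have "integrable M (\<lambda>w. (norm (Y w + Z w))\<^sup>2)"
  proof (rule Bochner_Integration.integrable_bound)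
    show "integrable M (\<lambda>w. 2 * (norm (Y w))\<^sup>2 + 2 * (norm (Z w))\<^sup>2)"
      using assms by (auto simp: L2rv_def)
    have "(norm (Y w + Z w))\<^sup>2 \<le> 2 * (norm (Y w))\<^sup>2 + 2 * (norm (Z w))\<^sup>2" for w
      using power_mono[OF norm_triangle_ineq[of "Y w" "Z w"], of 2]
        sum_squares_bound[of "norm (Y w)" "norm (Z w)"] by (simp add: power2_sum)
    then show "AE w in M. norm ((norm (Y w + Z w))\<^sup>2) \<le> norm (2 * (norm (Y w))\<^sup>2 + 2 * (norm (Z w))\<^sup>2)"
      by simp
  qed measurable
  then show ?thesis
    by (simp add: L2rv_def)
qed

lemma L2rv_scaleR: "Y \<in> L2rv M \<Longrightarrow> (\<lambda>w. c *\<^sub>R Y w) \<in> L2rv M"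
  by (auto simp: L2rv_def power_mult_distrib)

lemma L2rv_diff: "Y \<in> L2rv M \<Longrightarrow> Z \<in> L2rv M \<Longrightarrow> (\<lambda>w. Y w - Z w) \<in> L2rv M"
  using L2rv_add[OF _ L2rv_scaleR[of Z M "-1"], of Y] by simp

lemma (in finite_measure) L2rv_indicator_scaleR:
  assumes "A \<in> sets M"
  shows "(\<lambda>w. indicator A w *\<^sub>R x) \<in> L2rv M"
proof -
  have "(\<lambda>w. (norm (indicator A w *\<^sub>R x))\<^sup>2) = (\<lambda>w. indicator A w * (norm x)\<^sup>2)"
    by (auto simp: indicator_def)
  then show ?thesis
    using assms by (simp add: L2rv_def emeasure_real less_top[symmetric])
qed

lemma L2norm_scaleR: "L2norm M (\<lambda>w. c *\<^sub>R Y w) = \<bar>c\<bar> * L2norm M Y"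
  by (simp add: L2norm_def power_mult_distrib real_sqrt_mult)

lemma L2norm_nonneg: "0 \<le> L2norm M Y"
  by (simp add: L2norm_def)

lemma L2norm_square: "(L2norm M Y)\<^sup>2 = (\<integral>w. (norm (Y w))\<^sup>2 \<partial>M)"
  by (simp add: L2norm_def)

lemma frechet_L2_remainder:
  assumes "frechet_L2 M F X L" and "e > 0"
  shows "\<exists>d>0. \<forall>Y\<in>L2rv M. L2norm M Y < d \<longrightarrow> norm (F (\<lambda>w. X w + Y w) - F X - L Y) \<le> e * L2norm M Y"
  using assms by (simp add: frechet_L2_def)

lemma frechet_L2_scaleR:
  assumes "frechet_L2 M F X L" and "Y \<in> L2rv M"
  shows "L (\<lambda>w. c *\<^sub>R Y w) = c *\<^sub>R L Y"
  using assms by (simp add: frechet_L2_def)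

lemma frechet_L2_diff_small:
  assumes L: "frechet_L2 M F X L" and L': "frechet_L2 M F X L'" and "e > 0"
  shows "\<exists>d>0. \<forall>Y\<in>L2rv M. L2norm M Y < d \<longrightarrow> norm (L Y - L' Y) \<le> 2 * e * L2norm M Y"
proof -
  obtain d d' where "d > 0" "d' > 0"
    and d: "\<forall>Y\<in>L2rv M. L2norm M Y < d \<longrightarrow> norm (F (\<lambda>w. X w + Y w) - F X - L Y) \<le> e * L2norm M Y"
    and d': "\<forall>Y\<in>L2rv M. L2norm M Y < d' \<longrightarrow> norm (F (\<lambda>w. X w + Y w) - F X - L' Y) \<le> e * L2norm M Y"
    using frechet_L2_remainder[OF L \<open>e > 0\<close>] frechet_L2_remainder[OF L' \<open>e > 0\<close>] by blast
  have "norm (L Y - L' Y) \<le> 2 * e * L2norm M Y" if "Y \<in> L2rv M" "L2norm M Y < min d d'" for Y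
  proof -
    define R where "R = F (\<lambda>w. X w + Y w) - F X"
    have "L Y - L' Y = (R - L' Y) - (R - L Y)"
      by simp
    then have "norm (L Y - L' Y) \<le> norm (R - L' Y) + norm (R - L Y)"
      by (metis norm_triangle_ineq4)
    also have "\<dots> \<le> e * L2norm M Y + e * L2norm M Y"
      using d d' that unfolding R_def by (intro add_mono) auto
    finally show ?thesis
      by simp
  qed
  then show ?thesis
    using \<open>d > 0\<close> \<open>d' > 0\<close> by (intro exI[of _ "min d d'"]) auto
qed

lemma frechet_L2_unique:
  assumes L: "frechet_L2 M F X L" and L': "frechet_L2 M F X L'" and Y: "Y \<in> L2rv M"
  shows "L Y = L' Y"
proof -
  define N where "N = L2norm M Y"
  have "N \<ge> 0"
    by (simp add: N_def L2norm_nonneg)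
  have "norm (L Y - L' Y) \<le> 0 + e" if "e > 0" for e
  proof -
    define e' where "e' = e / (2 * (N + 1))"
    have "e' > 0"
      using \<open>e > 0\<close> \<open>N \<ge> 0\<close> by (simp add: e'_def)
    then obtain d where "d > 0"
      and d: "\<forall>Y\<in>L2rv M. L2norm M Y < d \<longrightarrow> norm (L Y - L' Y) \<le> 2 * e' * L2norm M Y"
      using frechet_L2_diff_small[OF L L'] by blast
    define t where "t = d / (N + 1)"
    have "t > 0"
      using \<open>d > 0\<close> \<open>N \<ge> 0\<close> by (simp add: t_def)
    have "t * N < d"
      using \<open>d > 0\<close> \<open>N \<ge> 0\<close> by (simp add: t_def divide_less_eq)
    have "L (\<lambda>w. t *\<^sub>R Y w) = t *\<^sub>R L Y" "L' (\<lambda>w. t *\<^sub>R Y w) = t *\<^sub>R L' Y"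
      using frechet_L2_scaleR[OF L Y] frechet_L2_scaleR[OF L' Y] by blast+
    then have "t * norm (L Y - L' Y) = norm (L (\<lambda>w. t *\<^sub>R Y w) - L' (\<lambda>w. t *\<^sub>R Y w))"
      using \<open>t > 0\<close> by (simp flip: scaleR_diff_right)
    also have "\<dots> \<le> 2 * e' * (t * N)"
      using bspec[OF d L2rv_scaleR[OF Y, of t]] \<open>t > 0\<close> \<open>t * N < d\<close>
      by (simp add: L2norm_scaleR N_def)
    also have "\<dots> = t * (e * (N / (N + 1)))"
      using \<open>N \<ge> 0\<close> by (simp add: e'_def field_simps add_nonneg_pos)
    also have "\<dots> \<le> t * e"
      using \<open>t > 0\<close> \<open>e > 0\<close> \<open>N \<ge> 0\<close> by (intro mult_left_mono mult_left_le) auto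
    finally show ?thesis
      using \<open>t > 0\<close> by simp
  qed
  then have "norm (L Y - L' Y) \<le> 0"
    by (rule field_le_epsilon)
  then show ?thesis
    by simp
qed

lemma norm_sum_indicator_scaleR_disjoint:
  assumes "finite I" and "disjoint_family_on A I"
  shows "norm (\<Sum>i\<in>I. indicator (A i) w *\<^sub>R x i) = (\<Sum>i\<in>I. indicator (A i) w * norm (x i))"
proof (cases "\<exists>j\<in>I. w \<in> A j")
  case True
  then obtain j where j: "j \<in> I" "w \<in> A j"
    by blast
  then have ind: "indicator (A i) w = (if i = j then 1 else 0)" if "i \<in> I" for i
    using assms(2) that unfolding disjoint_family_on_def indicator_def by auto
  have "(\<Sum>i\<in>I. indicator (A i) w *\<^sub>R x i) = (\<Sum>i\<in>I. if i = j then x i else 0)"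
    "(\<Sum>i\<in>I. indicator (A i) w * norm (x i)) = (\<Sum>i\<in>I. if i = j then norm (x i) else 0)"
    by (rule sum.cong, simp, simp add: ind)+
  then show ?thesis
    using assms(1) j(1) by simp
qed (auto simp: indicator_def)

lemma (in finite_measure) L2rv_sum_indicator_scaleR:
  assumes "finite I" and "\<forall>i\<in>I. A i \<in> sets M"
  shows "(\<lambda>w. \<Sum>i\<in>I. indicator (A i) w *\<^sub>R x i) \<in> L2rv M"
  using assms
proof (induction I rule: finite_induct)
  case empty
  then show ?case
    by (simp add: L2rv_def)
next
  case (insert j I)
  have "(\<lambda>w. \<Sum>i\<in>insert j I. indicator (A i) w *\<^sub>R x i)
      = (\<lambda>w. indicator (A j) w *\<^sub>R x j + (\<Sum>i\<in>I. indicator (A i) w *\<^sub>R x i))"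
    by (simp only: sum.insert[OF insert.hyps])
  then show ?case
    using insert by (auto intro!: L2rv_add L2rv_indicator_scaleR)
qed

lemma (in finite_measure) norm_on_indicator_le:
  fixes L :: "('a \<Rightarrow> 'h::{real_normed_vector, complete_space, second_countable_topology}) \<Rightarrow> 'h"
    and G :: "'a \<Rightarrow> ('h \<Rightarrow>\<^sub>L 'h)"
  assumes G_meas: "(\<lambda>w. norm (G w)) \<in> borel_measurable M"
    and G_sq: "integrable M (\<lambda>w. (norm (G w))\<^sup>2)"
    and L: "\<And>A x. A \<in> sets M \<Longrightarrow> L (\<lambda>w. indicator A w *\<^sub>R x) = (\<integral>w. indicator A w *\<^sub>R G w x \<partial>M)"
    and A: "A \<in> sets M"
  shows "integrable M (\<lambda>w. norm x * (norm (G w) * indicator A w))"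
    and "norm (L (\<lambda>w. indicator A w *\<^sub>R x)) \<le> (\<integral>w. norm x * (norm (G w) * indicator A w) \<partial>M)"
proof -
  have "integrable M (\<lambda>w. norm (G w) * 1)"
    using G_meas G_sq by (intro integrable_mult_if_square_integrable) auto
  then show int: "integrable M (\<lambda>w. norm x * (norm (G w) * indicator A w))"
    using A by (intro integrable_mult_right integrable_real_mult_indicator) auto
  have "norm (L (\<lambda>w. indicator A w *\<^sub>R x)) = norm (\<integral>w. indicator A w *\<^sub>R G w x \<partial>M)"
    using L A by simp
  also have "\<dots> \<le> (\<integral>w. norm (indicator A w *\<^sub>R G w x) \<partial>M)"
    by (rule integral_norm_bound_complete)
  also have "\<dots> \<le> (\<integral>w. norm x * (norm (G w) * indicator A w) \<partial>M)"
    using int norm_blinfun[of "G _" x] by (intro integral_mono') (auto simp: indicator_def mult_ac)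
  finally show "norm (L (\<lambda>w. indicator A w *\<^sub>R x)) \<le> (\<integral>w. norm x * (norm (G w) * indicator A w) \<partial>M)" .
qed

lemma (in finite_measure) sum_norm_on_indicators_le:
  fixes L :: "('a \<Rightarrow> 'h::{real_normed_vector, complete_space, second_countable_topology}) \<Rightarrow> 'h"
    and G :: "'a \<Rightarrow> ('h \<Rightarrow>\<^sub>L 'h)" and x :: "nat \<Rightarrow> 'h"
  assumes G_meas: "(\<lambda>w. norm (G w)) \<in> borel_measurable M"
    and G_sq: "integrable M (\<lambda>w. (norm (G w))\<^sup>2)"
    and L: "\<And>A x. A \<in> sets M \<Longrightarrow> L (\<lambda>w. indicator A w *\<^sub>R x) = (\<integral>w. indicator A w *\<^sub>R G w x \<partial>M)"
    and I: "finite I" and A: "\<forall>i\<in>I. A i \<in> sets M" and disj: "disjoint_family_on A I"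
  defines "S \<equiv> \<lambda>w. \<Sum>i\<in>I. indicator (A i) w *\<^sub>R x i"
  shows "(\<Sum>i\<in>I. norm (L (\<lambda>w. indicator (A i) w *\<^sub>R x i)))
    \<le> sqrt (\<integral>w. (norm (G w))\<^sup>2 \<partial>M) * sqrt (\<integral>w. (norm (S w))\<^sup>2 \<partial>M)"
proof -
  note bound = norm_on_indicator_le[OF G_meas G_sq L]
  have "S \<in> L2rv M"
    unfolding S_def using I A by (rule L2rv_sum_indicator_scaleR)
  have "(\<Sum>i\<in>I. norm (L (\<lambda>w. indicator (A i) w *\<^sub>R x i)))
      \<le> (\<Sum>i\<in>I. \<integral>w. norm (x i) * (norm (G w) * indicator (A i) w) \<partial>M)"
    using A bound(2) by (intro sum_mono) auto
  also have "\<dots> = (\<integral>w. (\<Sum>i\<in>I. norm (x i) * (norm (G w) * indicator (A i) w)) \<partial>M)"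
    using A bound(1) by (intro Bochner_Integration.integral_sum[symmetric]) auto
  also have "\<dots> = (\<integral>w. \<bar>norm (G w) * norm (S w)\<bar> \<partial>M)"
  proof (rule Bochner_Integration.integral_cong[OF refl])
    fix w
    have "(\<Sum>i\<in>I. norm (x i) * (norm (G w) * indicator (A i) w)) = norm (G w) * norm (S w)"
      by (simp add: S_def norm_sum_indicator_scaleR_disjoint[OF I disj] sum_distrib_left mult_ac)
    then show "(\<Sum>i\<in>I. norm (x i) * (norm (G w) * indicator (A i) w)) = \<bar>norm (G w) * norm (S w)\<bar>"
      by simp
  qed
  also have "\<dots> \<le> sqrt (\<integral>w. (norm (G w))\<^sup>2 \<partial>M) * sqrt (\<integral>w. (norm (S w))\<^sup>2 \<partial>M)"
    using G_meas G_sq \<open>S \<in> L2rv M\<close> by (intro Cauchy_Schwarz_integral) (auto simp: L2rv_def)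
  finally show ?thesis .
qed

lemma (in finite_measure) trinorm_power2_le_nn_integral:
  fixes L :: "('a \<Rightarrow> 'h::{real_normed_vector, complete_space, second_countable_topology}) \<Rightarrow> 'h"
    and G :: "'a \<Rightarrow> ('h \<Rightarrow>\<^sub>L 'h)"
  assumes G_meas: "(\<lambda>w. norm (G w)) \<in> borel_measurable M"
    and G_sq: "integrable M (\<lambda>w. (norm (G w))\<^sup>2)"
    and L: "\<And>A x. A \<in> sets M \<Longrightarrow> L (\<lambda>w. indicator A w *\<^sub>R x) = (\<integral>w. indicator A w *\<^sub>R G w x \<partial>M)"
  shows "(trinorm M L)\<^sup>2 \<le> (\<integral>\<^sup>+w. ennreal ((norm (G w))\<^sup>2) \<partial>M)"
proof -
  have "trinorm M L \<le> ennreal (sqrt (\<integral>w. (norm (G w))\<^sup>2 \<partial>M))"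
    unfolding trinorm_def
  proof (rule Sup_least, clarify)
    fix I :: "nat set" and A and x :: "nat \<Rightarrow> 'h"
    assume "finite I" "\<forall>i\<in>I. A i \<in> sets M" "disjoint_family_on A I"
      and S_sq: "(\<integral>w. (norm (\<Sum>i\<in>I. indicator (A i) w *\<^sub>R x i))\<^sup>2 \<partial>M) \<le> 1"
    from sum_norm_on_indicators_le[OF G_meas G_sq L this(1-3), of x] S_sq
    show "ennreal (\<Sum>i\<in>I. norm (L (\<lambda>w. indicator (A i) w *\<^sub>R x i)))
        \<le> ennreal (sqrt (\<integral>w. (norm (G w))\<^sup>2 \<partial>M))"
      by (intro ennreal_leI) (simp add: mult_left_le order_trans)
  qed
  then have "(trinorm M L)\<^sup>2 \<le> (ennreal (sqrt (\<integral>w. (norm (G w))\<^sup>2 \<partial>M)))\<^sup>2"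
    by (rule power_mono) simp
  also have "\<dots> = (\<integral>\<^sup>+w. ennreal ((norm (G w))\<^sup>2) \<partial>M)"
    using nn_integral_eq_integral[OF G_sq] by (simp add: ennreal_power integral_nonneg_AE)
  finally show ?thesis .
qed

lemma integral_tendsto_0_dominated_plus_vanishing:
  fixes a c :: "nat \<Rightarrow> 'a \<Rightarrow> real" and B :: "'a \<Rightarrow> real"
  assumes a_meas: "\<And>n. a n \<in> borel_measurable M" and a_nonneg: "\<And>n x. 0 \<le> a n x"
    and a_le: "\<And>n x. a n x \<le> B x + c n x"
    and B_int: "integrable M B" and B_nonneg: "\<And>x. 0 \<le> B x"
    and c_int: "\<And>n. integrable M (c n)" and c_nonneg: "\<And>n x. 0 \<le> c n x"
    and c_lim: "(\<lambda>n. \<integral>x. c n x \<partial>M) \<longlonglongrightarrow> 0"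
    and a_lim: "AE x in M. (\<lambda>n. a n x) \<longlonglongrightarrow> 0"
  shows "(\<lambda>n. \<integral>x. a n x \<partial>M) \<longlonglongrightarrow> 0"
proof -
  let ?t = "\<lambda>n x. min (a n x) (2 * B x)"
  have t_int: "integrable M (?t n)" for n
    by (rule Bochner_Integration.integrable_bound[where f="\<lambda>x. 2 * B x"])
      (use B_int a_meas a_nonneg B_nonneg in auto)
  have "(\<lambda>n. \<integral>x. ?t n x \<partial>M) \<longlonglongrightarrow> (\<integral>x. 0 \<partial>M)"
  proof (rule integral_dominated_convergence[where w="\<lambda>x. 2 * B x"])
    show "(\<lambda>x. ?t n x) \<in> borel_measurable M" for n
      using a_meas B_int by measurable
    show "AE x in M. (\<lambda>n. ?t n x) \<longlonglongrightarrow> 0"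
      using a_lim
    proof (rule AE_mp, intro AE_I2 impI)
      fix x
      assume "(\<lambda>n. a n x) \<longlonglongrightarrow> 0"
      then have "(\<lambda>n. ?t n x) \<longlonglongrightarrow> min 0 (2 * B x)"
        by (intro tendsto_min tendsto_const)
      then show "(\<lambda>n. ?t n x) \<longlonglongrightarrow> 0"
        using B_nonneg[of x] by simp
    qed
    show "AE x in M. norm (?t n x) \<le> 2 * B x" for n
      using a_nonneg B_nonneg by (intro AE_I2) auto
  qed (use B_int in simp_all)
  then have "(\<lambda>n. (\<integral>x. ?t n x \<partial>M) + 2 * (\<integral>x. c n x \<partial>M)) \<longlonglongrightarrow> 0 + 2 * 0"
    using c_lim by (intro tendsto_add tendsto_mult tendsto_const) auto
  then have upper_lim: "(\<lambda>n. (\<integral>x. ?t n x \<partial>M) + 2 * (\<integral>x. c n x \<partial>M)) \<longlonglongrightarrow> 0"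
    by simp
  have upper: "(\<integral>x. a n x \<partial>M) \<le> (\<integral>x. ?t n x \<partial>M) + 2 * (\<integral>x. c n x \<partial>M)" for n
  proof -
    have "a n x \<le> ?t n x + 2 * c n x" for x
      using a_le[of n x] B_nonneg[of x] c_nonneg[of n x] by (auto simp: min_def)
    then have "(\<integral>x. a n x \<partial>M) \<le> (\<integral>x. ?t n x + 2 * c n x \<partial>M)"
      using t_int c_int a_nonneg B_nonneg c_nonneg by (intro integral_mono') auto
    also have "\<dots> = (\<integral>x. ?t n x \<partial>M) + 2 * (\<integral>x. c n x \<partial>M)"
      using t_int c_int by simp
    finally show ?thesis .
  qed
  have "0 \<le> (\<integral>x. a n x \<partial>M)" for n
    using a_nonneg by (simp add: integral_nonneg_AE)
  with upper show ?thesis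
    by (intro tendsto_sandwich[OF _ _ tendsto_const upper_lim] always_eventually allI)
qed

lemma (in prob_space) integral_tendsto_0_along_subseq:
  fixes X :: "'a \<Rightarrow> 'h::{real_normed_vector, second_countable_topology}"
    and \<Phi> :: "'h \<Rightarrow> 'h \<Rightarrow> real"
  assumes X: "X \<in> L2rv M"
    and \<Phi>_nonneg: "\<And>x z. 0 \<le> \<Phi> x z"
    and \<Phi>_le: "\<And>x z. \<Phi> x z \<le> K * (1 + (norm x)\<^sup>2 + (norm z)\<^sup>2)"
    and \<Phi>_lim: "\<And>x. (\<Phi> x \<longlongrightarrow> 0) (nhds 0)"
    and \<Phi>_meas: "\<And>Z. Z \<in> L2rv M \<Longrightarrow> (\<lambda>w. \<Phi> (X w) (Z w)) \<in> borel_measurable M"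
    and Z: "\<And>n. Z n \<in> L2rv M" and Z_lim: "(\<lambda>n. L2norm M (Z n)) \<longlonglongrightarrow> 0"
  shows "\<exists>r. strict_mono r \<and> (\<lambda>n. \<integral>w. \<Phi> (X w) (Z (r n) w) \<partial>M) \<longlonglongrightarrow> 0"
proof -
  define u where "u = (\<lambda>n w. (norm (Z n w))\<^sup>2)"
  have u_int: "integrable M (u n)" for n
    using Z by (simp add: u_def L2rv_def)
  from tendsto_power[OF Z_lim, of 2]
  have u_lim: "(\<lambda>n. \<integral>w. u n w \<partial>M) \<longlonglongrightarrow> 0"
    by (simp add: u_def L2norm_square)
  then have "(\<lambda>n. \<integral>w. norm (u n w) \<partial>M) \<longlonglongrightarrow> 0"
    by (simp add: u_def)
  from tendsto_L1_AE_subseq[of M u, OF u_int this]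
  obtain r where "strict_mono r" and "AE w in M. (\<lambda>n. u (r n) w) \<longlonglongrightarrow> 0"
    by blast
  then have r: "AE w in M. (\<lambda>n. Z (r n) w) \<longlonglongrightarrow> 0"
    by (simp add: u_def tendsto_norm_zero_iff)
  have "K \<ge> 0"
    using \<Phi>_nonneg[of 0 0] \<Phi>_le[of 0 0] by simp
  have "(\<lambda>n. \<integral>w. \<Phi> (X w) (Z (r n) w) \<partial>M) \<longlonglongrightarrow> 0"
  proof (rule integral_tendsto_0_dominated_plus_vanishing)
    show "AE w in M. (\<lambda>n. \<Phi> (X w) (Z (r n) w)) \<longlonglongrightarrow> 0"
      using r by eventually_elim (rule filterlim_compose[OF \<Phi>_lim])
    show "\<Phi> (X w) (Z (r n) w) \<le> K * (1 + (norm (X w))\<^sup>2) + K * u (r n) w" for n w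
      unfolding u_def using \<Phi>_le[of "X w" "Z (r n) w"] by (simp add: algebra_simps)
    show "integrable M (\<lambda>w. K * (1 + (norm (X w))\<^sup>2))"
      using X by (auto simp: L2rv_def)
    show "(\<lambda>n. \<integral>w. K * u (r n) w \<partial>M) \<longlonglongrightarrow> 0"
      using tendsto_mult_right_zero[OF LIMSEQ_subseq_LIMSEQ[OF u_lim \<open>strict_mono r\<close>], of K]
      by (simp add: o_def)
    show "0 \<le> K * (1 + (norm (X w))\<^sup>2)" "0 \<le> K * u (r n) w" for n w
      using \<open>K \<ge> 0\<close> by (simp_all add: u_def)
  qed (use \<Phi>_meas[OF Z] u_int \<Phi>_nonneg in simp_all)
  with \<open>strict_mono r\<close> show ?thesis
    by blast
qed

lemma (in prob_space) integral_small_if_L2norm_small: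
  fixes X :: "'a \<Rightarrow> 'h::{real_normed_vector, second_countable_topology}"
    and \<Phi> :: "'h \<Rightarrow> 'h \<Rightarrow> real"
  assumes X: "X \<in> L2rv M"
    and \<Phi>_nonneg: "\<And>x z. 0 \<le> \<Phi> x z"
    and \<Phi>_le: "\<And>x z. \<Phi> x z \<le> K * (1 + (norm x)\<^sup>2 + (norm z)\<^sup>2)"
    and \<Phi>_lim: "\<And>x. (\<Phi> x \<longlongrightarrow> 0) (nhds 0)"
    and \<Phi>_meas: "\<And>Z. Z \<in> L2rv M \<Longrightarrow> (\<lambda>w. \<Phi> (X w) (Z w)) \<in> borel_measurable M"
    and "e > 0"
  shows "\<exists>d>0. \<forall>Z\<in>L2rv M. L2norm M Z < d \<longrightarrow> (\<integral>w. \<Phi> (X w) (Z w) \<partial>M) < e"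
proof (rule ccontr)
  assume "\<not> ?thesis"
  then have "\<exists>Z. Z \<in> L2rv M \<and> L2norm M Z < inverse (Suc n) \<and> e \<le> (\<integral>w. \<Phi> (X w) (Z w) \<partial>M)" for n
    by (metis inverse_positive_iff_positive not_less of_nat_0_less_iff zero_less_Suc)
  then obtain Z where Z: "\<And>n. Z n \<in> L2rv M" "\<And>n. L2norm M (Z n) < inverse (Suc n)"
    "\<And>n. e \<le> (\<integral>w. \<Phi> (X w) (Z n w) \<partial>M)"
    by metis
  have "(\<lambda>n. L2norm M (Z n)) \<longlonglongrightarrow> 0"
    using L2norm_nonneg Z(2)
    by (intro tendsto_sandwich[OF _ _ tendsto_const LIMSEQ_inverse_real_of_nat] always_eventually allI)
      (auto intro: less_imp_le)
  from integral_tendsto_0_along_subseq[OF assms(1-5) Z(1) this]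
  obtain r where "(\<lambda>n. \<integral>w. \<Phi> (X w) (Z (r n) w) \<partial>M) \<longlonglongrightarrow> 0"
    by blast
  from order_tendstoD(2)[OF this \<open>e > 0\<close>] obtain n where "(\<integral>w. \<Phi> (X w) (Z (r n) w) \<partial>M) < e"
    by (auto simp: eventually_sequentially)
  with Z(3)[of "r n"] show False
    by simp
qed

lemma power2_le_12_mult_if_le:
  fixes q K a b :: real
  assumes "0 \<le> q" and "q \<le> K * (2 + 2 * a + b)"
  shows "q\<^sup>2 \<le> 12 * K\<^sup>2 * (1 + a\<^sup>2 + b\<^sup>2)"
proof -
  have "q\<^sup>2 \<le> K\<^sup>2 * (2 + 2 * a + b)\<^sup>2"
    using assms power_mono[OF assms(2), of 2] by (simp add: power_mult_distrib)
  also have "\<dots> \<le> K\<^sup>2 * (12 * (1 + a\<^sup>2 + b\<^sup>2))"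
  proof (rule mult_left_mono)
    have "0 \<le> (2 - 2 * a)\<^sup>2 + (2 * a - b)\<^sup>2 + (2 - b)\<^sup>2 + 9 * b\<^sup>2"
      by simp
    then show "(2 + 2 * a + b)\<^sup>2 \<le> 12 * (1 + a\<^sup>2 + b\<^sup>2)"
      by (simp add: power2_eq_square algebra_simps)
  qed simp
  finally show ?thesis
    by (simp add: algebra_simps)
qed

lemma ennreal_less_if_power2_less: "(T::ennreal)\<^sup>2 < (ennreal e)\<^sup>2 \<Longrightarrow> T < ennreal e"
  using power_mono[of "ennreal e" T 2] by (meson not_le zero_le)

lemma borel_measurable_continuous_on_Pair:
  fixes g :: "'a::second_countable_topology \<times> 'b::second_countable_topology \<Rightarrow> 'c::topological_space"
  assumes "X \<in> borel_measurable M" "Y \<in> borel_measurable M" "continuous_on UNIV g"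
  shows "(\<lambda>w. g (X w, Y w)) \<in> borel_measurable M"
  using measurable_compose[OF borel_measurable_Pair[OF assms(1,2)] borel_measurable_continuous_onI[OF assms(3)]] .

locale linear_growth_derivative =
  fixes h :: "'h::{real_normed_vector, polish_space} \<Rightarrow> 'h"
    and Dh :: "'h \<Rightarrow> ('h \<Rightarrow>\<^sub>L 'h)"
    and C :: real
  assumes has_derivative_h: "\<And>u. (h has_derivative blinfun_apply (Dh u)) (at u)"
    and continuous_Dh: "continuous_on UNIV Dh"
    and Dh_growth: "\<And>u v. norm v = 1 \<Longrightarrow> norm (Dh u v) \<le> C * (1 + norm u)"
begin

lemma norm_Dh_le: "norm (Dh u) \<le> max C 0 * (1 + norm u)"
proof (rule norm_blinfun_bound)
  fix v
  show "norm (Dh u v) \<le> max C 0 * (1 + norm u) * norm v"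
  proof (cases "v = 0")
    case False
    have "norm (Dh u v) = norm v * norm (Dh u (v /\<^sub>R norm v))"
      using False by (simp add: blinfun.scaleR_right)
    also have "\<dots> \<le> norm v * (max C 0 * (1 + norm u))"
      using Dh_growth[of "v /\<^sub>R norm v" u] False
      by (intro mult_left_mono order_trans[OF _ mult_right_mono[of C "max C 0"]]) auto
    finally show ?thesis
      by (simp add: mult_ac)
  qed simp
qed simp

lemma norm_Dh_diff_le: "norm (Dh (x + z) - Dh x) \<le> max C 0 * (2 + 2 * norm x + norm z)"
proof -
  have "norm (Dh (x + z)) \<le> max C 0 * (1 + norm x + norm z)"
    using norm_Dh_le[of "x + z"] norm_triangle_ineq[of x z]
    by (smt (verit) max.cobounded2 mult_left_mono)
  then show ?thesis
    using norm_triangle_ineq4[of "Dh (x + z)" "Dh x"] norm_Dh_le[of x] by (simp add: algebra_simps)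
qed

lemma norm_Dh_sq_le: "(norm (Dh u))\<^sup>2 \<le> 2 * (max C 0)\<^sup>2 * (1 + (norm u)\<^sup>2)"
proof -
  have "(norm (Dh u))\<^sup>2 \<le> (max C 0)\<^sup>2 * (1 + norm u)\<^sup>2"
    using power_mono[OF norm_Dh_le[of u], of 2] by (simp add: power_mult_distrib)
  also have "\<dots> \<le> (max C 0)\<^sup>2 * (2 * (1 + (norm u)\<^sup>2))"
    using sum_squares_bound[of 1 "norm u"] by (intro mult_left_mono) (simp_all add: power2_sum)
  finally show ?thesis
    by (simp add: algebra_simps)
qed

lemma continuous_h: "continuous_on UNIV h"
  using has_derivative_h has_derivative_continuous continuous_at_imp_continuous_on by blast

lemma norm_h_le: "norm (h u) \<le> norm (h 0) + max C 0 + 2 * max C 0 * (norm u)\<^sup>2"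
proof -
  have "norm (h u - h 0) \<le> max C 0 * (1 + norm u) * norm (u - 0)"
  proof (rule differentiable_bound[OF convex_closed_segment])
    show "(h has_derivative Dh z) (at z within closed_segment 0 u)" for z
      using has_derivative_h by (rule has_derivative_at_withinI)
    show "onorm (Dh z) \<le> max C 0 * (1 + norm u)" if "z \<in> closed_segment 0 u" for z
      using norm_Dh_le[of z] segment_bound1[OF that] mult_left_mono[of "1 + norm z" "1 + norm u" "max C 0"]
      by (simp add: norm_blinfun.rep_eq)
  qed auto
  moreover have "(1 + norm u) * norm u \<le> 1 + 2 * (norm u)\<^sup>2"
  proof -
    have "2 * norm u \<le> 1 + (norm u)\<^sup>2"
      using sum_squares_bound[of 1 "norm u"] by simp
    moreover have "(1 + norm u) * norm u = norm u + (norm u)\<^sup>2"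
      by (simp add: power2_eq_square algebra_simps)
    ultimately show ?thesis
      using norm_ge_zero[of u] by linarith
  qed
  then have "max C 0 * (1 + norm u) * norm u \<le> max C 0 * (1 + 2 * (norm u)\<^sup>2)"
    by (simp add: mult.assoc mult_left_mono)
  ultimately show ?thesis
    using norm_triangle_ineq2[of "h u" "h 0"] by (simp add: algebra_simps)
qed

lemma remainder_le:
  assumes "\<And>t. 0 \<le> t \<Longrightarrow> t \<le> 1 \<Longrightarrow> norm (Dh (x + t *\<^sub>R y) - Dh x) \<le> B"
  shows "norm (h (x + y) - h x - Dh x y) \<le> B * norm y"
proof -
  let ?S = "(\<lambda>t. x + t *\<^sub>R y) ` {0..1}"
  have "norm (h (x + y) - h x - Dh x ((x + y) - x)) \<le> norm ((x + y) - x) * B"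
  proof (rule differentiable_bound_linearization[where S="?S" and f'="\<lambda>z. Dh z"])
    show "(h has_derivative Dh z) (at z within ?S)" for z
      using has_derivative_h by (rule has_derivative_at_withinI)
    show "onorm (blinfun_apply (Dh z) - blinfun_apply (Dh x)) \<le> B" if "z \<in> ?S" for z
    proof -
      have "blinfun_apply (Dh z) - blinfun_apply (Dh x) = blinfun_apply (Dh z - Dh x)"
        by (simp add: fun_eq_iff blinfun.diff_left)
      then show ?thesis
        using that assms by (auto simp: norm_blinfun.rep_eq)
    qed
  qed (force simp: image_iff)+
  then show ?thesis
    by (simp add: mult.commute)
qed

text \<open>Division by zero makes \<open>remainder_ratio x 0 = 0\<close>, so differentiability of \<open>h\<close> is continuity
  of \<open>remainder_ratio x\<close> at \<open>0\<close>.\<close>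

definition remainder_ratio :: "'h \<Rightarrow> 'h \<Rightarrow> real" where
  "remainder_ratio x y = norm (h (x + y) - h x - Dh x y) / norm y"

lemma remainder_ratio_nonneg: "0 \<le> remainder_ratio x y"
  by (simp add: remainder_ratio_def)

lemma remainder_ratio_le: "remainder_ratio x y \<le> max C 0 * (2 + 2 * norm x + norm y)"
proof (cases "y = 0")
  case False
  have "norm (h (x + y) - h x - Dh x y) \<le> max C 0 * (2 + 2 * norm x + norm y) * norm y"
  proof (rule remainder_le)
    fix t :: real
    assume "0 \<le> t" "t \<le> 1"
    then have "norm (t *\<^sub>R y) \<le> norm y"
      by (simp add: mult_left_le_one_le)
    then show "norm (Dh (x + t *\<^sub>R y) - Dh x) \<le> max C 0 * (2 + 2 * norm x + norm y)"
      using norm_Dh_diff_le[of x "t *\<^sub>R y"] by (smt (verit) max.cobounded2 mult_left_mono)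
  qed
  then show ?thesis
    using False by (simp add: remainder_ratio_def divide_le_eq)
qed (simp add: remainder_ratio_def)

lemma remainder_ratio_tendsto_0: "(remainder_ratio x \<longlongrightarrow> 0) (nhds 0)"
proof -
  have "((\<lambda>y. norm (h y - h x - Dh x (y - x)) / norm (y - x)) \<longlongrightarrow> 0) (at x)"
    using has_derivative_h[of x] by (simp add: has_derivative_iff_norm)
  then have "remainder_ratio x \<midarrow>0\<rightarrow> 0"
    by (subst (asm) LIM_offset_zero_iff) (simp_all add: remainder_ratio_def[abs_def])
  then show ?thesis
    using tendsto_at_iff_tendsto_nhds[of "remainder_ratio x" 0] by (simp add: remainder_ratio_def)
qed

lemma Dh_diff_tendsto_0: "((\<lambda>z. (norm (Dh (x + z) - Dh x))\<^sup>2) \<longlongrightarrow> 0) (nhds 0)"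
proof -
  have "isCont Dh (x + 0)"
    using continuous_Dh by (simp add: continuous_on_eq_continuous_at)
  then have "isCont (\<lambda>z. Dh (x + z)) 0"
    using isCont_o2[where f="\<lambda>z. x + z" and a=0 and g=Dh] by simp
  then have "isCont (\<lambda>z. (norm (Dh (x + z) - Dh x))\<^sup>2) 0"
    by (intro continuous_intros)
  then show ?thesis
    using tendsto_at_iff_tendsto_nhds[of "\<lambda>z. (norm (Dh (x + z) - Dh x))\<^sup>2" 0]
    by (simp add: isCont_def)
qed

end

locale L2_lifted_mean = linear_growth_derivative h Dh C + prob_space M
  for h :: "'h::{real_normed_vector, polish_space} \<Rightarrow> 'h" and Dh C and M :: "'w measure"
begin

abbreviation lifted_mean :: "('w \<Rightarrow> 'h) \<Rightarrow> 'h" where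
  "lifted_mean \<equiv> lift M (\<lambda>\<mu>. integral\<^sup>L \<mu> h)"

lemma L2rv_measurable: "X \<in> L2rv M \<Longrightarrow> X \<in> borel_measurable M"
  by (simp add: L2rv_def)

lemma measurable_norm_Dh_comp: "X \<in> borel_measurable M \<Longrightarrow> (\<lambda>w. norm (Dh (X w))) \<in> borel_measurable M"
  by (rule borel_measurable_continuous_on[OF continuous_on_norm[OF continuous_Dh]])

lemma measurable_Dh_apply:
  assumes "X \<in> borel_measurable M" "Y \<in> borel_measurable M"
  shows "(\<lambda>w. Dh (X w) (Y w)) \<in> borel_measurable M"
proof -
  have "continuous_on UNIV (\<lambda>p::'h \<times> 'h. Dh (fst p) (snd p))"
    by (intro continuous_intros continuous_on_compose2[OF continuous_Dh]) auto
  from borel_measurable_continuous_on_Pair[OF assms this] show ?thesis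
    by simp
qed

lemma integrable_h_comp:
  assumes "X \<in> L2rv M"
  shows "integrable M (\<lambda>w. h (X w))"
proof (rule integrable_bound_complete)
  show "integrable M (\<lambda>w. norm (h 0) + max C 0 + 2 * max C 0 * (norm (X w))\<^sup>2)"
    using assms by (auto simp: L2rv_def)
  show "(\<lambda>w. h (X w)) \<in> borel_measurable M"
    using assms by (intro borel_measurable_continuous_on[OF continuous_h] L2rv_measurable)
qed (simp add: norm_h_le)

lemma lifted_mean_eq:
  assumes "X \<in> borel_measurable M"
  shows "lifted_mean X = (\<integral>w. h (X w) \<partial>M)"
  unfolding lift_def
  using assms borel_measurable_continuous_onI[OF continuous_h] by (rule integral_distr_complete)

lemma integrable_norm_Dh_comp_sq:
  assumes "X \<in> L2rv M"
  shows "integrable M (\<lambda>w. (norm (Dh (X w)))\<^sup>2)"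
proof (rule Bochner_Integration.integrable_bound)
  show "integrable M (\<lambda>w. 2 * (max C 0)\<^sup>2 * (1 + (norm (X w))\<^sup>2))"
    using assms by (auto simp: L2rv_def)
  show "(\<lambda>w. (norm (Dh (X w)))\<^sup>2) \<in> borel_measurable M"
    using measurable_norm_Dh_comp[OF L2rv_measurable[OF assms]] by simp
qed (simp add: norm_Dh_sq_le)

lemma integrable_norm_Dh_comp_mult_norm:
  assumes "X \<in> L2rv M" "Y \<in> L2rv M"
  shows "integrable M (\<lambda>w. norm (Dh (X w)) * norm (Y w))"
  using assms integrable_norm_Dh_comp_sq[OF assms(1)]
  by (intro integrable_mult_if_square_integrable measurable_norm_Dh_comp)
    (auto simp: L2rv_def)

lemma integrable_Dh_apply:
  assumes "X \<in> L2rv M" "Y \<in> L2rv M"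
  shows "integrable M (\<lambda>w. Dh (X w) (Y w))"
proof (rule integrable_bound_complete)
  show "(\<lambda>w. Dh (X w) (Y w)) \<in> borel_measurable M"
    using assms by (intro measurable_Dh_apply L2rv_measurable)
qed (use integrable_norm_Dh_comp_mult_norm[OF assms] norm_blinfun in auto)

lemma norm_integral_Dh_apply_le:
  assumes "X \<in> L2rv M" "Y \<in> L2rv M"
  shows "norm (\<integral>w. Dh (X w) (Y w) \<partial>M) \<le> sqrt (\<integral>w. (norm (Dh (X w)))\<^sup>2 \<partial>M) * L2norm M Y"
proof -
  have "norm (\<integral>w. Dh (X w) (Y w) \<partial>M) \<le> (\<integral>w. norm (Dh (X w) (Y w)) \<partial>M)"
    by (rule integral_norm_bound_complete)
  also have "\<dots> \<le> (\<integral>w. \<bar>norm (Dh (X w)) * norm (Y w)\<bar> \<partial>M)"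
    using integrable_norm_Dh_comp_mult_norm[OF assms] norm_blinfun by (intro integral_mono') auto
  also have "\<dots> \<le> sqrt (\<integral>w. (norm (Dh (X w)))\<^sup>2 \<partial>M) * L2norm M Y"
    unfolding L2norm_def using assms integrable_norm_Dh_comp_sq[OF assms(1)]
    by (intro Cauchy_Schwarz_integral measurable_norm_Dh_comp) (auto simp: L2rv_def)
  finally show ?thesis .
qed

lemma measurable_remainder_ratio:
  assumes [measurable]: "X \<in> borel_measurable M" "Y \<in> borel_measurable M"
  shows "(\<lambda>w. remainder_ratio (X w) (Y w)) \<in> borel_measurable M"
proof -
  have [measurable]: "(\<lambda>w. h (X w + Y w)) \<in> borel_measurable M" "(\<lambda>w. h (X w)) \<in> borel_measurable M"
    by (rule borel_measurable_continuous_on[OF continuous_h], measurable)+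
  have [measurable]: "(\<lambda>w. Dh (X w) (Y w)) \<in> borel_measurable M"
    by (rule measurable_Dh_apply[OF assms])
  show ?thesis
    unfolding remainder_ratio_def by measurable
qed

lemma integrable_remainder_ratio_sq:
  assumes "X \<in> L2rv M" "Y \<in> L2rv M"
  shows "integrable M (\<lambda>w. (remainder_ratio (X w) (Y w))\<^sup>2)"
proof (rule Bochner_Integration.integrable_bound)
  show "integrable M (\<lambda>w. 12 * (max C 0)\<^sup>2 * (1 + (norm (X w))\<^sup>2 + (norm (Y w))\<^sup>2))"
    using assms by (auto simp: L2rv_def)
  show "(\<lambda>w. (remainder_ratio (X w) (Y w))\<^sup>2) \<in> borel_measurable M"
    using measurable_remainder_ratio[OF L2rv_measurable L2rv_measurable, OF assms] by simp
  show "AE w in M. norm ((remainder_ratio (X w) (Y w))\<^sup>2)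
      \<le> norm (12 * (max C 0)\<^sup>2 * (1 + (norm (X w))\<^sup>2 + (norm (Y w))\<^sup>2))"
    using power2_le_12_mult_if_le[OF remainder_ratio_nonneg remainder_ratio_le] by simp
qed

lemma norm_lifted_mean_remainder_le:
  assumes X: "X \<in> L2rv M" and Y: "Y \<in> L2rv M"
  shows "norm (lifted_mean (\<lambda>w. X w + Y w) - lifted_mean X - (\<integral>w. Dh (X w) (Y w) \<partial>M))
    \<le> sqrt (\<integral>w. (remainder_ratio (X w) (Y w))\<^sup>2 \<partial>M) * L2norm M Y"
proof -
  have "lifted_mean (\<lambda>w. X w + Y w) - lifted_mean X - (\<integral>w. Dh (X w) (Y w) \<partial>M)
      = (\<integral>w. h (X w + Y w) - h (X w) - Dh (X w) (Y w) \<partial>M)"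
    using X Y integrable_h_comp[OF L2rv_add[OF X Y]] integrable_h_comp[OF X] integrable_Dh_apply[OF X Y]
    by (simp add: lifted_mean_eq[OF L2rv_measurable[OF L2rv_add[OF X Y]]] lifted_mean_eq[OF L2rv_measurable[OF X]])
  also have "norm \<dots> \<le> (\<integral>w. norm (h (X w + Y w) - h (X w) - Dh (X w) (Y w)) \<partial>M)"
    by (rule integral_norm_bound_complete)
  also have "\<dots> = (\<integral>w. \<bar>remainder_ratio (X w) (Y w) * norm (Y w)\<bar> \<partial>M)"
    by (rule Bochner_Integration.integral_cong) (auto simp: remainder_ratio_def)
  also have "\<dots> \<le> sqrt (\<integral>w. (remainder_ratio (X w) (Y w))\<^sup>2 \<partial>M) * L2norm M Y"
    unfolding L2norm_def using X Y integrable_remainder_ratio_sq[OF X Y]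
    by (intro Cauchy_Schwarz_integral measurable_remainder_ratio) (auto simp: L2rv_def)
  finally show ?thesis .
qed

lemma frechet_L2_lifted_mean:
  assumes X: "X \<in> L2rv M"
  shows "frechet_L2 M lifted_mean X (\<lambda>Y. \<integral>w. Dh (X w) (Y w) \<partial>M)"
  unfolding frechet_L2_def
proof (intro conjI ballI allI impI)
  fix Y Z :: "'w \<Rightarrow> 'h"
  assume "Y \<in> L2rv M" "Z \<in> L2rv M"
  then show "(\<integral>w. Dh (X w) (Y w + Z w) \<partial>M) = (\<integral>w. Dh (X w) (Y w) \<partial>M) + (\<integral>w. Dh (X w) (Z w) \<partial>M)"
    using integrable_Dh_apply[OF X] by (simp add: blinfun.add_right)
next
  show "\<exists>K. \<forall>Y\<in>L2rv M. norm (\<integral>w. Dh (X w) (Y w) \<partial>M) \<le> K * L2norm M Y"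
    using norm_integral_Dh_apply_le[OF X] by blast
next
  fix e :: real assume "e > 0"
  have "\<exists>d>0. \<forall>Y\<in>L2rv M. L2norm M Y < d \<longrightarrow> (\<integral>w. (remainder_ratio (X w) (Y w))\<^sup>2 \<partial>M) < e\<^sup>2"
  proof (rule integral_small_if_L2norm_small[OF X])
    show "((\<lambda>z. (remainder_ratio x z)\<^sup>2) \<longlongrightarrow> 0) (nhds 0)" for x
      using tendsto_power[OF remainder_ratio_tendsto_0, of x 2] by simp
    show "(remainder_ratio x z)\<^sup>2 \<le> 12 * (max C 0)\<^sup>2 * (1 + (norm x)\<^sup>2 + (norm z)\<^sup>2)" for x z
      by (rule power2_le_12_mult_if_le[OF remainder_ratio_nonneg remainder_ratio_le])
    show "(\<lambda>w. (remainder_ratio (X w) (Z w))\<^sup>2) \<in> borel_measurable M" if "Z \<in> L2rv M" for Z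
      using measurable_remainder_ratio[OF L2rv_measurable L2rv_measurable, OF X that] by simp
  qed (use \<open>e > 0\<close> in simp_all)
  then obtain d where "d > 0"
    and d: "\<And>Y. Y \<in> L2rv M \<Longrightarrow> L2norm M Y < d \<Longrightarrow> (\<integral>w. (remainder_ratio (X w) (Y w))\<^sup>2 \<partial>M) < e\<^sup>2"
    by blast
  have "norm (lifted_mean (\<lambda>w. X w + Y w) - lifted_mean X - (\<integral>w. Dh (X w) (Y w) \<partial>M)) \<le> e * L2norm M Y"
    if "Y \<in> L2rv M" "L2norm M Y < d" for Y
  proof -
    have "sqrt (\<integral>w. (remainder_ratio (X w) (Y w))\<^sup>2 \<partial>M) \<le> e"
      using d[OF that] \<open>e > 0\<close> real_sqrt_less_mono[of _ "e\<^sup>2"] by fastforce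
    then show ?thesis
      using norm_lifted_mean_remainder_le[OF X that(1)] L2norm_nonneg[of M Y]
      by (meson mult_right_mono order_trans)
  qed
  then show "\<exists>d>0. \<forall>Y\<in>L2rv M. L2norm M Y < d \<longrightarrow>
      norm (lifted_mean (\<lambda>w. X w + Y w) - lifted_mean X - (\<integral>w. Dh (X w) (Y w) \<partial>M)) \<le> e * L2norm M Y"
    using \<open>d > 0\<close> by blast
qed (simp add: blinfun.scaleR_right)


lemma frechet_L2_lifted_mean_indicator:
  assumes "X \<in> L2rv M" and "frechet_L2 M lifted_mean X L" and "A \<in> sets M"
  shows "L (\<lambda>w. indicator A w *\<^sub>R x) = (\<integral>w. indicator A w *\<^sub>R Dh (X w) x \<partial>M)"
  using frechet_L2_unique[OF assms(2) frechet_L2_lifted_mean[OF assms(1)] L2rv_indicator_scaleR[OF assms(3)]]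
  by (simp add: blinfun.scaleR_right)

lemma trinorm_power2_le_Dh:
  assumes "X \<in> L2rv M" and "frechet_L2 M lifted_mean X L"
  shows "(trinorm M L)\<^sup>2 \<le> (\<integral>\<^sup>+w. ennreal ((norm (Dh (X w)))\<^sup>2) \<partial>M)"
proof (rule trinorm_power2_le_nn_integral)
  show "(\<lambda>w. norm (Dh (X w))) \<in> borel_measurable M"
    using assms(1) by (intro measurable_norm_Dh_comp L2rv_measurable)
  show "integrable M (\<lambda>w. (norm (Dh (X w)))\<^sup>2)"
    using assms(1) by (rule integrable_norm_Dh_comp_sq)
qed (rule frechet_L2_lifted_mean_indicator[OF assms])

lemma nn_integral_norm_Dh_comp_sq_finite:
  assumes "X \<in> L2rv M"
  shows "(\<integral>\<^sup>+w. ennreal ((norm (Dh (X w)))\<^sup>2) \<partial>M) < \<infinity>"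
  using nn_integral_eq_integral[OF integrable_norm_Dh_comp_sq[OF assms]] by simp

lemma measurable_norm_Dh_diff:
  assumes "X \<in> borel_measurable M" "Y \<in> borel_measurable M"
  shows "(\<lambda>w. norm (Dh (X w) - Dh (Y w))) \<in> borel_measurable M"
proof -
  have "continuous_on UNIV (\<lambda>p::'h \<times> 'h. norm (Dh (fst p) - Dh (snd p)))"
    by (intro continuous_intros continuous_on_compose2[OF continuous_Dh]) auto
  from borel_measurable_continuous_on_Pair[OF assms this] show ?thesis
    by simp
qed

lemma integrable_norm_Dh_diff_sq:
  assumes "X \<in> L2rv M" "Y \<in> L2rv M"
  shows "integrable M (\<lambda>w. (norm (Dh (X w) - Dh (Y w)))\<^sup>2)"
proof (rule Bochner_Integration.integrable_bound)
  show "integrable M (\<lambda>w. 2 * (norm (Dh (X w)))\<^sup>2 + 2 * (norm (Dh (Y w)))\<^sup>2)"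
    using integrable_norm_Dh_comp_sq[OF assms(1)] integrable_norm_Dh_comp_sq[OF assms(2)] by simp
  show "(\<lambda>w. (norm (Dh (X w) - Dh (Y w)))\<^sup>2) \<in> borel_measurable M"
    using measurable_norm_Dh_diff[OF L2rv_measurable L2rv_measurable, OF assms] by simp
  have "(norm (Dh (X w) - Dh (Y w)))\<^sup>2 \<le> 2 * (norm (Dh (X w)))\<^sup>2 + 2 * (norm (Dh (Y w)))\<^sup>2" for w
    using power_mono[OF norm_triangle_ineq4[of "Dh (X w)" "Dh (Y w)"], of 2]
      sum_squares_bound[of "norm (Dh (X w))" "norm (Dh (Y w))"] by (simp add: power2_sum)
  then show "AE w in M. norm ((norm (Dh (X w) - Dh (Y w)))\<^sup>2)
      \<le> norm (2 * (norm (Dh (X w)))\<^sup>2 + 2 * (norm (Dh (Y w)))\<^sup>2)"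
    by simp
qed

lemma trinorm_diff_power2_le_Dh_diff:
  assumes X: "X \<in> L2rv M" and Y: "Y \<in> L2rv M"
    and LX: "frechet_L2 M lifted_mean X L" and LY: "frechet_L2 M lifted_mean Y L'"
  shows "(trinorm M (\<lambda>Z. L Z - L' Z))\<^sup>2 \<le> (\<integral>\<^sup>+w. ennreal ((norm (Dh (X w) - Dh (Y w)))\<^sup>2) \<partial>M)"
proof (rule trinorm_power2_le_nn_integral)
  show "(\<lambda>w. norm (Dh (X w) - Dh (Y w))) \<in> borel_measurable M"
    using X Y by (intro measurable_norm_Dh_diff L2rv_measurable)
  show "integrable M (\<lambda>w. (norm (Dh (X w) - Dh (Y w)))\<^sup>2)"
    using X Y by (rule integrable_norm_Dh_diff_sq)
  fix A x assume A: "A \<in> sets M"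
  have "integrable M (\<lambda>w. indicator A w *\<^sub>R Dh (Z w) x)" if "Z \<in> L2rv M" for Z
    using integrable_Dh_apply[OF that L2rv_indicator_scaleR[OF A]] by (simp add: blinfun.scaleR_right)
  then show "L (\<lambda>w. indicator A w *\<^sub>R x) - L' (\<lambda>w. indicator A w *\<^sub>R x)
      = (\<integral>w. indicator A w *\<^sub>R (Dh (X w) - Dh (Y w)) x \<partial>M)"
    using X Y by (simp add: frechet_L2_lifted_mean_indicator[OF _ _ A] LX LY blinfun.diff_left scaleR_diff_right)
qed

lemma Dh_comp_L2_continuous:
  assumes X: "X \<in> L2rv M" and "e > 0"
  shows "\<exists>d>0. \<forall>X'\<in>L2rv M. L2norm M (\<lambda>w. X' w - X w) < d \<longrightarrow>
    (\<integral>w. (norm (Dh (X' w) - Dh (X w)))\<^sup>2 \<partial>M) < e"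
proof -
  have "\<exists>d>0. \<forall>Z\<in>L2rv M. L2norm M Z < d \<longrightarrow> (\<integral>w. (norm (Dh (X w + Z w) - Dh (X w)))\<^sup>2 \<partial>M) < e"
  proof (rule integral_small_if_L2norm_small[OF X])
    show "(norm (Dh (x + z) - Dh x))\<^sup>2 \<le> 12 * (max C 0)\<^sup>2 * (1 + (norm x)\<^sup>2 + (norm z)\<^sup>2)" for x z
      by (rule power2_le_12_mult_if_le[OF norm_ge_zero norm_Dh_diff_le])
    show "(\<lambda>w. (norm (Dh (X w + Z w) - Dh (X w)))\<^sup>2) \<in> borel_measurable M" if "Z \<in> L2rv M" for Z
      using measurable_norm_Dh_diff[OF borel_measurable_add L2rv_measurable, OF L2rv_measurable L2rv_measurable]
        X that by simp
  qed (use \<open>e > 0\<close> Dh_diff_tendsto_0 in simp_all)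
  then obtain d where "d > 0" and d: "\<And>Z. Z \<in> L2rv M \<Longrightarrow> L2norm M Z < d \<Longrightarrow>
      (\<integral>w. (norm (Dh (X w + Z w) - Dh (X w)))\<^sup>2 \<partial>M) < e"
    by blast
  have "(\<integral>w. (norm (Dh (X' w) - Dh (X w)))\<^sup>2 \<partial>M) < e"
    if "X' \<in> L2rv M" "L2norm M (\<lambda>w. X' w - X w) < d" for X'
    using d[OF L2rv_diff[OF that(1) X] that(2)] by simp
  with \<open>d > 0\<close> show ?thesis
    by blast
qed

lemma abs_cont_L_diff_lifted_mean: "abs_cont_L_diff M (\<lambda>\<mu>. integral\<^sup>L \<mu> h)"
  unfolding abs_cont_L_diff_def
proof (intro conjI ballI allI impI)
  fix X :: "'w \<Rightarrow> 'h"
  assume X: "X \<in> L2rv M"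
  have "(trinorm M (\<lambda>Y. \<integral>w. Dh (X w) (Y w) \<partial>M))\<^sup>2 < \<infinity>"
    using trinorm_power2_le_Dh[OF X frechet_L2_lifted_mean[OF X]] nn_integral_norm_Dh_comp_sq_finite[OF X]
    by (rule order_le_less_trans)
  then show "\<exists>L. frechet_L2 M lifted_mean X L \<and> trinorm M L < \<infinity>"
    using frechet_L2_lifted_mean[OF X] by (auto simp: power_less_top_ennreal)
next
  fix X :: "'w \<Rightarrow> 'h" and e :: real
  assume X: "X \<in> L2rv M" and "e > 0"
  then obtain d where "d > 0" and d: "\<forall>X'\<in>L2rv M. L2norm M (\<lambda>w. X' w - X w) < d \<longrightarrow>
      (\<integral>w. (norm (Dh (X' w) - Dh (X w)))\<^sup>2 \<partial>M) < e\<^sup>2"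
    using Dh_comp_L2_continuous[OF X, of "e\<^sup>2"] by auto
  have "trinorm M (\<lambda>Y. L' Y - L Y) < ennreal e"
    if X': "X' \<in> L2rv M" and L: "frechet_L2 M lifted_mean X L" and L': "frechet_L2 M lifted_mean X' L'"
      and "L2norm M (\<lambda>w. X' w - X w) < d" for X' L L'
  proof -
    have "(trinorm M (\<lambda>Y. L' Y - L Y))\<^sup>2 \<le> ennreal (\<integral>w. (norm (Dh (X' w) - Dh (X w)))\<^sup>2 \<partial>M)"
      using trinorm_diff_power2_le_Dh_diff[OF X' X L' L]
        nn_integral_eq_integral[OF integrable_norm_Dh_diff_sq[OF X' X]] by simp
    also have "\<dots> < ennreal (e\<^sup>2)"
      using d X' \<open>L2norm M (\<lambda>w. X' w - X w) < d\<close> \<open>e > 0\<close> by (intro ennreal_lessI) simp_all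
    also have "\<dots> = (ennreal e)\<^sup>2"
      using \<open>e > 0\<close> by (simp add: ennreal_power)
    finally show ?thesis
      by (rule ennreal_less_if_power2_less)
  qed
  with \<open>d > 0\<close> show "\<exists>d>0. \<forall>X'\<in>L2rv M. \<forall>L L'. frechet_L2 M lifted_mean X L \<longrightarrow>
      frechet_L2 M lifted_mean X' L' \<longrightarrow> L2norm M (\<lambda>w. X' w - X w) < d \<longrightarrow> trinorm M (\<lambda>Y. L' Y - L Y) < ennreal e"
    by blast
qed

lemma is_L_derivative_Dh:
  assumes "\<mu>0 \<in> P2"
  shows "is_L_derivative M (\<lambda>\<mu>. integral\<^sup>L \<mu> h) \<mu>0 Dh"
proof -
  interpret \<mu>0: prob_space \<mu>0
    using assms by (simp add: P2_def)
  have sets_\<mu>0: "sets \<mu>0 = sets borel"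
    using assms by (simp add: P2_def)
  have continuous_measurable: "f \<in> borel_measurable \<mu>0" if "continuous_on UNIV f"
    for f :: "'h \<Rightarrow> 'c::topological_space"
    using borel_measurable_continuous_onI[OF that] measurable_cong_sets[OF sets_\<mu>0 refl, of "borel :: 'c measure"]
    by simp
  have "integrable \<mu>0 (\<lambda>x. (norm x)\<^sup>2)"
    using assms by (intro integrableI_nonneg continuous_measurable continuous_intros) (auto simp: P2_def)
  have "integrable \<mu>0 (\<lambda>x. (norm (Dh x))\<^sup>2)"
  proof (rule Bochner_Integration.integrable_bound[where f="\<lambda>x. 2 * (max C 0)\<^sup>2 * (1 + (norm x)\<^sup>2)"])
    show "integrable \<mu>0 (\<lambda>x. 2 * (max C 0)\<^sup>2 * (1 + (norm x)\<^sup>2))"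
      using \<open>integrable \<mu>0 (\<lambda>x. (norm x)\<^sup>2)\<close> by simp
    show "(\<lambda>x. (norm (Dh x))\<^sup>2) \<in> borel_measurable \<mu>0"
      by (intro continuous_measurable continuous_intros continuous_Dh)
  qed (simp add: norm_Dh_sq_le)
  then have "(\<integral>\<^sup>+x. ennreal ((norm (Dh x))\<^sup>2) \<partial>\<mu>0) < \<infinity>"
    by (simp add: integrable_iff_bounded)
  moreover have "L Y = (\<integral>w. Dh (X w) (Y w) \<partial>M)"
    if "X \<in> L2rv M" "frechet_L2 M lifted_mean X L" "Y \<in> L2rv M" for X L Y
    using frechet_L2_unique[OF that(2) frechet_L2_lifted_mean[OF that(1)] that(3)] .
  ultimately show ?thesis
    using continuous_measurable[OF continuous_Dh] by (simp add: is_L_derivative_def)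
qed

end

theorem lemma3p13:
  fixes M :: "'w::polish_space measure"
    and h :: "'h::{real_inner, polish_space} \<Rightarrow> 'h"
    and Dh :: "'h \<Rightarrow> ('h \<Rightarrow>\<^sub>L 'h)"
    and C :: real
  assumes "prob_space M" and "complete_measure M" and "atomless M"
    and "space M = UNIV" and "sets (borel :: 'w measure) \<subseteq> sets M"
    and deriv: "\<And>u. (h has_derivative blinfun_apply (Dh u)) (at u)"
    and cont: "continuous_on UNIV Dh"
    and growth: "\<And>u v. norm v = 1 \<Longrightarrow> norm (blinfun_apply (Dh u) v) \<le> C * (1 + norm u)"
  shows "(\<forall>X1\<in>L2rv M. \<exists>L. frechet_L2 M (lift M (\<lambda>\<mu>. integral\<^sup>L \<mu> h)) X1 L)
    \<and> (\<forall>X1\<in>L2rv M. \<forall>L1. frechet_L2 M (lift M (\<lambda>\<mu>. integral\<^sup>L \<mu> h)) X1 L1 \<longrightarrow>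
          (trinorm M L1)\<^sup>2 \<le> (\<integral>\<^sup>+ w. ennreal ((norm (Dh (X1 w)))\<^sup>2) \<partial>M)
          \<and> (\<integral>\<^sup>+ w. ennreal ((norm (Dh (X1 w)))\<^sup>2) \<partial>M) < \<infinity>)
    \<and> (\<forall>X1\<in>L2rv M. \<forall>X2\<in>L2rv M. \<forall>L1 L2.
          frechet_L2 M (lift M (\<lambda>\<mu>. integral\<^sup>L \<mu> h)) X1 L1 \<longrightarrow>
          frechet_L2 M (lift M (\<lambda>\<mu>. integral\<^sup>L \<mu> h)) X2 L2 \<longrightarrow>
          (trinorm M (\<lambda>Y. L1 Y - L2 Y))\<^sup>2 \<le> (\<integral>\<^sup>+ w. ennreal ((norm (Dh (X1 w) - Dh (X2 w)))\<^sup>2) \<partial>M))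
    \<and> abs_cont_L_diff M (\<lambda>\<mu>. integral\<^sup>L \<mu> h)
    \<and> (\<forall>\<mu>0\<in>P2. is_L_derivative M (\<lambda>\<mu>. integral\<^sup>L \<mu> h) \<mu>0 Dh)"
proof -
  \<comment> \<open>of the hypotheses on \<open>M\<close>, only \<open>prob_space M\<close> is needed\<close>
  interpret L2_lifted_mean h Dh C M
    using assms(1) deriv cont growth by (simp add: L2_lifted_mean_def linear_growth_derivative_def)
  show ?thesis
    using frechet_L2_lifted_mean trinorm_power2_le_Dh nn_integral_norm_Dh_comp_sq_finite
      trinorm_diff_power2_le_Dh_diff abs_cont_L_diff_lifted_mean is_L_derivative_Dh
    by blast
qed

end
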